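(* Let $\mathscr{C}\subseteq\mathbb{F}_2^{n}$ be a binary linear block code of length $n$ and dimension $k$, with no idle bits and with minimum distance $d_{\min}\ge 2$. Fix $p\in[0,1]$. For each position $j\in\{1,\dots,n\}$, let $E_j\subseteq\{1,\dots,n\}\setminus\{j\}$ be a random set of erased positions, each position $\ell\neq j$ belonging to $E_j$ independently with probability $p$, and let $S_j=\{1,\dots,n\}\setminus(E_j\cup\{j\})$ be the set of non-erased positions other than $j$. Say that position $j$ is recoverable by (extrinsic) MAP erasure decoding if for all $c,c'\in\mathscr{C}$ with $c_\ell=c'_\ell$ for all $\ell\in S_j$ one has $c_j=c'_j$. Let $q$ be the probability that position $j$ is not recoverable, averaged uniformly over $j\in\{1,\dots,n\}$. Then $$q=\frac{1}{n}\sum_{t=0}^{n-1}p^{t}(1-p)^{n-1-t}\Big[(n-t)\,\tilde e_{n-t}-(t+1)\,\tilde e_{n-1-t}\Big],$$ where $\tilde e_g$ is the $g$th un-normalized information function of $\mathscr{C}$.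
   Context: A coordinate of a linear code is an idle bit if it equals $0$ in every codeword (equivalently, the corresponding column of a generator matrix is zero). Let $\mathbf{G}$ be a $k\times n$ generator matrix of $\mathscr{C}$. For $0\le g\le n$, the $g$th un-normalized information function of $\mathscr{C}$ is $\tilde e_g=\sum_{T}\mathrm{rank}(\mathbf{G}_T)$, where the sum runs over all $\binom{n}{g}$ subsets $T\subseteq\{1,\dots,n\}$ of size $g$ and $\mathbf{G}_T$ is the $k\times g$ submatrix of $\mathbf{G}$ formed by the columns indexed by $T$ (with $\mathrm{rank}$ of an empty matrix equal to $0$, so $\tilde e_0=0$); it does not depend on the choice of generator matrix. *)

theory Defs
  imports "HOL-Library.Z2" "HOL-Probability.Product_PMF"
    "Jordan_Normal_Form.DL_Rank" "Jordan_Normal_Form.DL_Submatrix"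
begin

text \<open>Binary vectors are \<open>bit vec\<close> (\<open>bit\<close> is the field F_2); positions are 0,...,n-1.\<close>

definition generator_matrix :: "bit mat \<Rightarrow> nat \<Rightarrow> nat \<Rightarrow> bit vec set \<Rightarrow> bool" where
  "generator_matrix G k n C \<longleftrightarrow>
     G \<in> carrier_mat k n \<and> vec_space.rank k G = k \<and>
     C = {transpose_mat G *\<^sub>v u | u. u \<in> carrier_vec k}"

definition info_fun :: "bit mat \<Rightarrow> nat \<Rightarrow> nat" where
  "info_fun G g = (\<Sum>T\<in>{T. T \<subseteq> {0..<dim_col G} \<and> card T = g}.
                     vec_space.rank (dim_row G) (submatrix G UNIV T))"

definition no_idle_bits :: "bit vec set \<Rightarrow> nat \<Rightarrow> bool" where
  "no_idle_bits C n \<longleftrightarrow> (\<forall>j<n. \<exists>c\<in>C. c $ j \<noteq> 0)"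

definition hamming_weight :: "nat \<Rightarrow> bit vec \<Rightarrow> nat" where
  "hamming_weight n c = card {i. i < n \<and> c $ i \<noteq> 0}"

definition min_dist_ge :: "bit vec set \<Rightarrow> nat \<Rightarrow> nat \<Rightarrow> bool" where
  "min_dist_ge C n d \<longleftrightarrow>
     (\<forall>c\<in>C. \<forall>c'\<in>C. c \<noteq> c' \<longrightarrow> hamming_weight n (c - c') \<ge> d)"

definition recoverable :: "bit vec set \<Rightarrow> nat set \<Rightarrow> nat \<Rightarrow> bool" where
  "recoverable C S j \<longleftrightarrow>
     (\<forall>c\<in>C. \<forall>c'\<in>C. (\<forall>l\<in>S. c $ l = c' $ l) \<longrightarrow> c $ j = c' $ j)"

text \<open>Erasure pattern for position j: each l \<noteq> j (l < n) is erased independently with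
  probability p; the random set E_j is {l. f l}.\<close>
definition erasure_pmf :: "nat \<Rightarrow> nat \<Rightarrow> real \<Rightarrow> (nat \<Rightarrow> bool) pmf" where
  "erasure_pmf n j p = Pi_pmf ({0..<n} - {j}) False (\<lambda>_. bernoulli_pmf p)"

definition nonrec_prob :: "bit vec set \<Rightarrow> nat \<Rightarrow> real \<Rightarrow> real" where
  "nonrec_prob C n p = (1 / real n) * (\<Sum>j<n.
      measure_pmf.prob (erasure_pmf n j p)
        {f. \<not> recoverable C ({0..<n} - ({l. f l} \<union> {j})) j})"

end

theory Submission
  imports Defs
begin

text \<open>
  Write \<open>rk(T)\<close> for the rank of the columns of \<open>G\<close> indexed by \<open>T\<close>.
  Position \<open>j\<close> is recoverable from the surviving positions \<open>S\<close> iff column \<open>j\<close> lies in the span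
  of the columns in \<open>S\<close> (a vector outside a span is separated from it by a linear functional),
  i.e.\ iff \<open>rk(S \<union> {j}) = rk(S)\<close>; otherwise the rank grows by exactly one.  Hence the
  probability that \<open>j\<close> is not recoverable is the expectation of the rank increment
  \<open>rk(S \<union> {j}) - rk(S)\<close> over the random survivor set \<open>S\<close>.  Summing over \<open>j\<close>, double
  counting the pairs \<open>(j, S)\<close> and grouping the sets by cardinality leaves only the layer sums
  \<open>\<Sum>\<^bsub>|T| = g\<^esub> rk(T)\<close>, which are the information functions \<open>e\<^sub>g\<close>.
\<close>

context vec_space
begin

text \<open>An independent subset \<open>B\<close> of \<open>X\<close> whose span contains \<open>X\<close> is a maximal independent
  subset of \<open>X\<close>; the library computes the dimension of a span from such a set.\<close>
lemma maximal_indpt_if_spanning: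
  assumes "lin_indpt B" "B \<subseteq> X" "X \<subseteq> span B" "X \<subseteq> carrier_vec n"
  shows "maximal B (\<lambda>T. T \<subseteq> X \<and> lin_indpt T)"
  unfolding maximal_def
proof (intro conjI allI impI)
  show "B \<subseteq> X" "lin_indpt B" using assms by auto
  fix T assume T: "B \<subseteq> T \<and> T \<subseteq> X \<and> lin_indpt T"
  show "T = B"
  proof (rule ccontr)
    assume "T \<noteq> B"
    then obtain x where x: "x \<in> T" "x \<notin> B" using T by blast
    have carrier: "B \<subseteq> carrier_vec n" "x \<in> carrier_vec n" and "x \<in> span B"
      using x T assms by auto
    then have "lin_dep (insert x B)"
      using lin_dep_iff_in_span[OF carrier(1) assms(1) carrier(2) x(2)] by auto
    then have "lin_dep T" using supset_ld_is_ld[of "insert x B" T] x T by auto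
    then show False using T by auto
  qed
qed

lemma indpt_spanning_subset_exists:
  assumes "finite A" "A \<subseteq> carrier_vec n"
  obtains B where "lin_indpt B" "B \<subseteq> A" "A \<subseteq> span B"
proof -
  have "lin_indpt {}"
    by (metis empty_subsetI fin_dim finite_basis_exists subset_li_is_li vec_vs vectorspace.basis_def)
  then obtain B where B: "maximal B (\<lambda>T. T \<subseteq> A \<and> lin_indpt T)"
    using maximal_exists[of "\<lambda>T. T \<subseteq> A \<and> lin_indpt T" "card A" "{}"] assms
    by (meson card_mono empty_subsetI rev_finite_subset)
  then have B_indpt: "lin_indpt B" "B \<subseteq> A" unfolding maximal_def by auto
  then have B_carrier: "B \<subseteq> carrier_vec n" using assms by auto
  have "a \<in> span B" if a: "a \<in> A" for a
  proof (rule ccontr)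
    assume a_out: "a \<notin> span B"
    then have "a \<notin> B" using in_own_span[OF B_carrier] by auto
    then have "lin_indpt (insert a B)"
      using lin_dep_iff_in_span[OF B_carrier B_indpt(1)] a a_out assms by auto
    then have "insert a B = B" using B a B_indpt unfolding maximal_def by blast
    then show False using \<open>a \<notin> B\<close> by auto
  qed
  then have "A \<subseteq> span B" by blast
  with B_indpt show ?thesis by (rule that)
qed

lemma basis_extension_exists:
  assumes "lin_indpt B" "B \<subseteq> carrier_vec n"
  obtains B' where "finite B'" "basis B'" "B \<subseteq> B'"
proof -
  define P where "P T \<longleftrightarrow> B \<subseteq> T \<and> T \<subseteq> carrier_vec n \<and> lin_indpt T" for T
  have "finite T \<and> card T \<le> n" if "P T" for T
    using that li_le_dim[OF fin_dim] dim_is_n unfolding P_def by simp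
  then obtain B' where B': "finite B'" "maximal B' P"
    using maximal_exists[of P n B] assms unfolding P_def by blast
  then have B_B': "B \<subseteq> B'" "B' \<subseteq> carrier_vec n" "lin_indpt B'"
    unfolding maximal_def P_def by simp_all
  have "maximal B' (\<lambda>S. S \<subseteq> carrier V \<and> lin_indpt S)"
    unfolding maximal_def
  proof (intro conjI allI impI)
    show "B' \<subseteq> carrier V" "lin_indpt B'" using B_B' by simp_all
    fix T assume T: "B' \<subseteq> T \<and> T \<subseteq> carrier V \<and> lin_indpt T"
    then have "P T" using B_B'(1) unfolding P_def by auto
    then show "T = B'" using B'(2) T unfolding maximal_def by blast
  qed
  then have "basis B'" by (simp add: max_li_is_basis)
  then show ?thesis using that B'(1) B_B'(1) by blast
qed

text \<open>It is a column of the inverse of the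
  (invertible) matrix whose rows are the basis vectors.\<close>
lemma dual_vector_exists:
  assumes "finite B" "basis B" "v \<in> B"
  shows "\<exists>w\<in>carrier_vec n. v \<bullet> w = 1 \<and> (\<forall>b\<in>B - {v}. b \<bullet> w = 0)"
proof -
  have B_carrier: "B \<subseteq> carrier_vec n" "lin_indpt B" using assms(2) unfolding basis_def by auto
  obtain bs where bs: "set bs = B" "distinct bs" using finite_distinct_list[OF assms(1)] by blast
  have len: "length bs = n"
    using bs dim_basis[OF assms(1,2)] dim_is_n distinct_card by fastforce
  define M where "M = mat_of_cols n bs"
  have M: "M \<in> carrier_mat n n" "cols M = bs" unfolding M_def using len bs B_carrier by auto
  then have "det M \<noteq> 0" using lin_indpt_full_rank[OF M(1)] det_rank_iff[OF M(1)] bs B_carrier by auto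
  then have MT: "transpose_mat M \<in> carrier_mat n n" "det (transpose_mat M) \<noteq> 0"
    using M(1) det_transpose[OF M(1)] by auto
  then obtain Mi where Mi: "Mi \<in> carrier_mat n n" "transpose_mat M * Mi = 1\<^sub>m n"
    using det_non_zero_imp_unit[OF MT, of "()"] unfolding Units_def by (auto simp: ring_mat_simps)
  obtain i where i: "i < n" "bs ! i = v" using assms(3) bs len by (auto simp: in_set_conv_nth)
  define w where "w = Mi *\<^sub>v unit_vec n i"
  have w: "w \<in> carrier_vec n" "transpose_mat M *\<^sub>v w = unit_vec n i"
    unfolding w_def using assoc_mult_mat_vec[OF MT(1) Mi(1), of "unit_vec n i"] Mi by auto
  have dual: "bs ! j \<bullet> w = (if j = i then 1 else 0)" if "j < n" for j
  proof -
    have "(transpose_mat M *\<^sub>v w) $ j = row (transpose_mat M) j \<bullet> w" using that M by auto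
    also have "row (transpose_mat M) j = bs ! j" using that M by (metis carrier_matD(2) cols_nth row_transpose)
    finally show ?thesis using w that by (simp add: unit_vec_def)
  qed
  have "b \<bullet> w = 0" if b: "b \<in> B - {v}" for b
  proof -
    obtain j where j: "j < n" "bs ! j = b" using b bs len by (auto simp: in_set_conv_nth)
    then have "j \<noteq> i" using i b by auto
    with dual[OF j(1)] j(2) show ?thesis by simp
  qed
  then show ?thesis using w(1) dual[OF i(1)] i by auto
qed

text \<open>A vector outside the span of a finite set is separated from it by a linear functional
  \<open>x \<mapsto> x \<bullet> w\<close>: extend an independent spanning subset, together with the vector, to a basis
  and take the dual vector.\<close>
lemma separating_vector_exists:
  assumes A: "finite A" "A \<subseteq> carrier_vec n" and v: "v \<in> carrier_vec n" "v \<notin> span A"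
  shows "\<exists>w\<in>carrier_vec n. (\<forall>a\<in>A. a \<bullet> w = 0) \<and> v \<bullet> w = 1"
proof -
  obtain B where B: "lin_indpt B" "B \<subseteq> A" "A \<subseteq> span B"
    using indpt_spanning_subset_exists[OF A] by blast
  have B_carrier: "B \<subseteq> carrier_vec n" using B A by auto
  have v_out: "v \<notin> span B" using span_is_monotone[OF B(2)] v by auto
  then have "v \<notin> B" using in_own_span[OF B_carrier] by auto
  then have vB: "lin_indpt (insert v B)"
    using lin_dep_iff_in_span[OF B_carrier B(1) v(1)] v_out by auto
  have "insert v B \<subseteq> carrier_vec n" using B_carrier v by auto
  then obtain B' where B': "finite B'" "basis B'" "insert v B \<subseteq> B'"
    by (rule basis_extension_exists[OF vB])
  then obtain w where w: "w \<in> carrier_vec n" "v \<bullet> w = 1" "\<forall>b\<in>B'-{v}. b \<bullet> w = 0"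
    using dual_vector_exists[of B' v] by auto
  then have w_B: "\<forall>b\<in>B. b \<bullet> w = 0" using B'(3) \<open>v \<notin> B\<close> by auto
  have "w \<in> orthogonal_complement B"
    unfolding orthogonal_complement_def
  proof (intro CollectI conjI ballI w(1))
    fix b assume "b \<in> B"
    then show "w \<bullet> b = 0" using w_B comm_scalar_prod[OF w(1), of b] B_carrier by auto
  qed
  then have w_perp: "w \<in> orthogonal_complement (span B)" using B_carrier by simp
  have "a \<bullet> w = 0" if a: "a \<in> A" for a
  proof -
    have "a \<in> span B" "a \<in> carrier_vec n" using a B(3) A(2) by auto
    then show ?thesis using w_perp comm_scalar_prod[of a n w] w(1)
      unfolding orthogonal_complement_def by auto
  qed
  then show ?thesis using w by auto
qed

lemma in_span_iff_orthogonal: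
  assumes A: "finite A" "A \<subseteq> carrier_vec n" and v: "v \<in> carrier_vec n"
  shows "v \<in> span A \<longleftrightarrow> (\<forall>w\<in>carrier_vec n. (\<forall>a\<in>A. a \<bullet> w = 0) \<longrightarrow> v \<bullet> w = 0)"
proof
  assume "v \<in> span A"
  show "\<forall>w\<in>carrier_vec n. (\<forall>a\<in>A. a \<bullet> w = 0) \<longrightarrow> v \<bullet> w = 0"
  proof (intro ballI impI)
    fix w assume w: "w \<in> carrier_vec n" "\<forall>a\<in>A. a \<bullet> w = 0"
    have "w \<in> orthogonal_complement A"
      unfolding orthogonal_complement_def
    proof (intro CollectI conjI ballI w(1))
      fix a assume "a \<in> A"
      then show "w \<bullet> a = 0" using w(2) comm_scalar_prod[OF w(1), of a] A(2) by auto
    qed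
    then have "w \<in> orthogonal_complement (span A)" using A(2) by simp
    then have "w \<bullet> v = 0" using \<open>v \<in> span A\<close> unfolding orthogonal_complement_def by auto
    then show "v \<bullet> w = 0" using comm_scalar_prod[OF w(1) v] by simp
  qed
next
  assume "\<forall>w\<in>carrier_vec n. (\<forall>a\<in>A. a \<bullet> w = 0) \<longrightarrow> v \<bullet> w = 0"
  then show "v \<in> span A" using separating_vector_exists[OF A v] by force
qed

lemma dim_span_insert:
  assumes A: "finite A" "A \<subseteq> carrier_vec n" and v: "v \<in> carrier_vec n"
  shows "vectorspace.dim class_ring (span_vs (insert v A)) =
         vectorspace.dim class_ring (span_vs A) + (if v \<in> span A then 0 else 1)"
proof -
  obtain B where B: "lin_indpt B" "B \<subseteq> A" "A \<subseteq> span B"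
    using indpt_spanning_subset_exists[OF A] by blast
  have B_carrier: "B \<subseteq> carrier_vec n" and "finite B" using B A finite_subset by auto
  have vA: "insert v A \<subseteq> carrier_vec n" using A v by auto
  have dim_A: "vectorspace.dim class_ring (span_vs A) = card B"
    using dim_span[OF A(2,1) maximal_indpt_if_spanning[OF B A(2)]] .
  have span_A: "span A = span B"
    using span_is_subset[OF B(3) span_is_submodule[OF B_carrier]] span_is_monotone[OF B(2)] by auto
  show ?thesis
  proof (cases "v \<in> span A")
    case True
    then have "maximal B (\<lambda>T. T \<subseteq> insert v A \<and> lin_indpt T)"
      using maximal_indpt_if_spanning[OF B(1) _ _ vA] B span_A by auto
    then show ?thesis using dim_span[OF vA] A dim_A True by auto
  next
    case False
    then have v_out: "v \<notin> span B" using span_A by simp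
    then have "v \<notin> B" using in_own_span[OF B_carrier] by auto
    then have "lin_indpt (insert v B)"
      using lin_dep_iff_in_span[OF B_carrier B(1) v] v_out by auto
    moreover have "insert v A \<subseteq> span (insert v B)"
      using B(3) span_is_monotone[OF subset_insertI[of B v]] in_own_span[of "insert v B"]
        B_carrier v by blast
    ultimately have "maximal (insert v B) (\<lambda>T. T \<subseteq> insert v A \<and> lin_indpt T)"
      using maximal_indpt_if_spanning[OF _ _ _ vA] B by auto
    then show ?thesis using dim_span[OF vA] A dim_A False \<open>finite B\<close> \<open>v \<notin> B\<close> by auto
  qed
qed

end

lemma col_submatrix_UNIV:
  assumes "j < card {j. j < dim_col A \<and> j \<in> J}"
  shows "col (submatrix A UNIV J) j = col A (pick J j)"
proof (rule eq_vecI)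
  show "dim_vec (col (submatrix A UNIV J) j) = dim_vec (col A (pick J j))"
    by (simp add: dim_submatrix)
  fix i assume "i < dim_vec (col A (pick J j))"
  then have i: "i < dim_row A" "i < card {i. i < dim_row A \<and> i \<in> UNIV}" by simp_all
  have "j < dim_col (submatrix A UNIV J)" "i < dim_row (submatrix A UNIV J)"
    using assms i by (simp_all add: dim_submatrix)
  then show "col (submatrix A UNIV J) j $ i = col A (pick J j) $ i"
    using submatrix_index[OF i(2) assms] pick_le[OF assms] i pick_UNIV by simp
qed

lemma set_cols_submatrix_UNIV:
  assumes "J \<subseteq> {0..<dim_col A}"
  shows "set (cols (submatrix A UNIV J)) = col A ` J"
proof -
  have J: "{j. j < dim_col A \<and> j \<in> J} = J" using assms by auto
  have "finite J" using assms finite_subset by blast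
  have "pick J ` {..<card J} = J"
  proof
    show "pick J ` {..<card J} \<subseteq> J" using pick_in_set by auto
    show "J \<subseteq> pick J ` {..<card J}"
    proof
      fix i assume i: "i \<in> J"
      have "{a\<in>J. a < i} \<subset> J" using i by auto
      then have "card {a\<in>J. a < i} < card J" using \<open>finite J\<close> psubset_card_mono by blast
      then show "i \<in> pick J ` {..<card J}" using pick_card_in_set[OF i] by force
    qed
  qed
  moreover have "set (cols (submatrix A UNIV J)) = (\<lambda>j. col A (pick J j)) ` {..<card J}"
    using col_submatrix_UNIV[of _ A J] J by (auto simp: cols_def dim_submatrix)
  ultimately show ?thesis by (metis image_image)
qed

definition col_rank :: "'a::field mat \<Rightarrow> nat set \<Rightarrow> nat" where
  "col_rank G T = vec_space.rank (dim_row G) (submatrix G UNIV T)"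

lemma (in vec_space) col_rank_insert:
  assumes G: "G \<in> carrier_mat n m" and T: "T \<subseteq> {0..<m}" and j: "j < m"
  shows "col_rank G (insert j T) = col_rank G T + (if col G j \<in> span (col G ` T) then 0 else 1)"
proof -
  have cols: "col G ` T' \<subseteq> carrier_vec n" "finite (col G ` T')"
    if "T' \<subseteq> {0..<m}" for T' using G that finite_subset by auto
  have rows: "dim_row G = n" using G by auto
  have rank_T: "col_rank G T' = vectorspace.dim class_ring (span_vs (col G ` T'))"
    if "T' \<subseteq> {0..<m}" for T'
    unfolding col_rank_def rows rank_def using set_cols_submatrix_UNIV[of T' G] that G by auto
  have "col G j \<in> carrier_vec n" using G by auto
  then show ?thesis
    using rank_T[OF T] rank_T[of "insert j T"] T j dim_span_insert[OF cols(2,1)[OF T]] by auto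
qed

lemma codeword_coordinate:
  assumes "G \<in> carrier_mat k n" "l < n"
  shows "(transpose_mat G *\<^sub>v u) $ l = col G l \<bullet> u"
  using assms by auto

text \<open>Position \<open>j\<close> is recoverable from the positions \<open>S\<close> iff every message invisible on \<open>S\<close>
  (orthogonal to the columns in \<open>S\<close>) is invisible at \<open>j\<close>: by linearity, two codewords agreeing
  on \<open>S\<close> differ by the codeword of such a message.\<close>
lemma recoverable_iff_orthogonal:
  fixes G :: "bit mat"
  assumes G: "G \<in> carrier_mat k n" and C: "C = {transpose_mat G *\<^sub>v u | u. u \<in> carrier_vec k}"
    and S: "S \<subseteq> {0..<n}" and j: "j < n"
  shows "recoverable C S j \<longleftrightarrow>
         (\<forall>u\<in>carrier_vec k. (\<forall>l\<in>S. col G l \<bullet> u = 0) \<longrightarrow> col G j \<bullet> u = 0)"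
proof
  assume rec: "recoverable C S j"
  show "\<forall>u\<in>carrier_vec k. (\<forall>l\<in>S. col G l \<bullet> u = 0) \<longrightarrow> col G j \<bullet> u = 0"
  proof (intro ballI impI)
    fix u assume u: "u \<in> carrier_vec k" "\<forall>l\<in>S. col G l \<bullet> u = 0"
    have "transpose_mat G *\<^sub>v u \<in> C" "transpose_mat G *\<^sub>v 0\<^sub>v k \<in> C" using C u by auto
    moreover have "\<forall>l\<in>S. (transpose_mat G *\<^sub>v u) $ l = (transpose_mat G *\<^sub>v 0\<^sub>v k) $ l"
      using u S G codeword_coordinate[OF G] by auto
    ultimately have "(transpose_mat G *\<^sub>v u) $ j = (transpose_mat G *\<^sub>v 0\<^sub>v k) $ j"
      using rec unfolding recoverable_def by blast
    then show "col G j \<bullet> u = 0" using j G codeword_coordinate[OF G j] by auto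
  qed
next
  assume orth: "\<forall>u\<in>carrier_vec k. (\<forall>l\<in>S. col G l \<bullet> u = 0) \<longrightarrow> col G j \<bullet> u = 0"
  show "recoverable C S j"
    unfolding recoverable_def
  proof (intro ballI impI)
    fix c c' assume "c \<in> C" "c' \<in> C" and agree: "\<forall>l\<in>S. c $ l = c' $ l"
    then obtain u u' where u: "u \<in> carrier_vec k" "c = transpose_mat G *\<^sub>v u"
      and u': "u' \<in> carrier_vec k" "c' = transpose_mat G *\<^sub>v u'" using C by auto
    have diff: "col G l \<bullet> (u - u') = col G l \<bullet> u - col G l \<bullet> u'" if "l < n" for l
      using scalar_prod_minus_distrib[of "col G l" k u u'] G u u' that by auto
    have "col G l \<bullet> (u - u') = 0" if l: "l \<in> S" for l
    proof -
      have "l < n" using l S by auto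
      then have "col G l \<bullet> u = col G l \<bullet> u'" using agree l u u' codeword_coordinate[OF G] by metis
      then show ?thesis unfolding diff[OF \<open>l < n\<close>] by simp
    qed
    then have "col G j \<bullet> (u - u') = 0" using orth u u' by auto
    then have "col G j \<bullet> u = col G j \<bullet> u'" by (metis diff[OF j] right_minus_eq)
    then show "c $ j = c' $ j" using u u' codeword_coordinate[OF G j] by auto
  qed
qed

lemma col_rank_insert_recoverable:
  fixes G :: "bit mat"
  assumes G: "G \<in> carrier_mat k n" and C: "C = {transpose_mat G *\<^sub>v u | u. u \<in> carrier_vec k}"
    and S: "S \<subseteq> {0..<n}" and j: "j < n"
  shows "col_rank G (insert j S) = col_rank G S + (if recoverable C S j then 0 else 1)"
proof -
  interpret vec_space "TYPE(bit)" k .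
  have cols: "finite (col G ` S)" "col G ` S \<subseteq> carrier_vec k" "col G j \<in> carrier_vec k"
    using S G finite_subset by auto
  have "(\<forall>l\<in>S. col G l \<bullet> u = 0) \<longleftrightarrow> (\<forall>a\<in>col G ` S. a \<bullet> u = 0)" for u by auto
  then have "recoverable C S j \<longleftrightarrow> col G j \<in> span (col G ` S)"
    using recoverable_iff_orthogonal[OF G C S j] in_span_iff_orthogonal[OF cols] by simp
  then show ?thesis using col_rank_insert[OF G S j] by simp
qed

lemma pmf_Pi_bernoulli_set:
  assumes D: "finite D" and E: "E \<subseteq> D" and p: "0 \<le> p" "p \<le> 1"
  shows "pmf (Pi_pmf D False (\<lambda>_. bernoulli_pmf p)) (\<lambda>x. x \<in> E) =
         p ^ card E * (1 - p) ^ (card D - card E)"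
proof -
  have "finite E" using D E finite_subset by blast
  have "pmf (Pi_pmf D False (\<lambda>_. bernoulli_pmf p)) (\<lambda>x. x \<in> E) =
        (\<Prod>x\<in>E \<union> (D - E). pmf (bernoulli_pmf p) (x \<in> E))"
    using D E by (subst pmf_Pi') (auto intro: prod.cong)
  also have "\<dots> = (\<Prod>x\<in>E. p) * (\<Prod>x\<in>D - E. 1 - p)"
    using \<open>finite E\<close> D p by (subst prod.union_disjoint) auto
  also have "\<dots> = p ^ card E * (1 - p) ^ (card D - card E)"
    using E \<open>finite E\<close> by (simp add: card_Diff_subset)
  finally show ?thesis .
qed

lemma prob_Pi_bernoulli:
  assumes D: "finite D" and p: "0 \<le> p" "p \<le> 1"
  shows "measure_pmf.prob (Pi_pmf D False (\<lambda>_. bernoulli_pmf p)) {f. Q {l. f l}} =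
         (\<Sum>E\<in>Pow D. p ^ card E * (1 - p) ^ (card D - card E) * (if Q E then 1 else 0))"
proof -
  define M where "M = Pi_pmf D False (\<lambda>_. bernoulli_pmf p)"
  define F where "F = (\<lambda>E x. x \<in> E) ` Pow D"
  have inj: "inj_on (\<lambda>E x. x \<in> E) (Pow D)" by (rule inj_onI) (simp add: fun_eq_iff set_eq_iff)
  have "set_pmf M \<subseteq> F"
  proof (rule subsetI)
    fix f assume "f \<in> set_pmf M"
    then have "\<forall>x. x \<notin> D \<longrightarrow> f x = False"
      using set_Pi_pmf_subset[OF D, of False "\<lambda>_. bernoulli_pmf p"] unfolding M_def by blast
    then have "{l. f l} \<in> Pow D" by auto
    moreover have "f = (\<lambda>x. x \<in> {l. f l})" by simp
    ultimately show "f \<in> F" unfolding F_def by blast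
  qed
  moreover have "finite F" unfolding F_def using D by auto
  ultimately have "measure_pmf.prob M {f. Q {l. f l}} = (\<Sum>f\<in>F \<inter> {f. Q {l. f l}}. pmf M f)"
    by (subst measure_measure_pmf_finite[symmetric]) (auto intro!: measure_eq_AE AE_pmfI)
  also have "\<dots> = (\<Sum>f\<in>F. if Q {l. f l} then pmf M f else 0)"
    using \<open>finite F\<close> by (simp add: sum.inter_restrict)
  also have "\<dots> = (\<Sum>E\<in>Pow D. if Q E then pmf M (\<lambda>x. x \<in> E) else 0)"
    unfolding F_def by (simp add: sum.reindex[OF inj])
  also have "\<dots> = (\<Sum>E\<in>Pow D. p ^ card E * (1 - p) ^ (card D - card E) * (if Q E then 1 else 0))"
    unfolding M_def using pmf_Pi_bernoulli_set[OF D _ p] by (intro sum.cong) auto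
  finally show ?thesis unfolding M_def .
qed

text \<open>Probability that position \<open>j\<close> is not recoverable, as a sum over the sets \<open>S\<close> of surviving
  positions: by \<open>col_rank_insert_recoverable\<close> the indicator of non-recoverability is the
  rank increment \<open>rk(S \<union> {j}) - rk(S)\<close>.\<close>
lemma nonrec_prob_position:
  fixes G :: "bit mat"
  assumes G: "G \<in> carrier_mat k n" and C: "C = {transpose_mat G *\<^sub>v u | u. u \<in> carrier_vec k}"
    and j: "j < n" and p: "0 \<le> p" "p \<le> 1"
  shows "measure_pmf.prob (erasure_pmf n j p) {f. \<not> recoverable C ({0..<n} - ({l. f l} \<union> {j})) j} =
         (\<Sum>S\<in>Pow ({0..<n} - {j}). p ^ (n - 1 - card S) * (1 - p) ^ card S *
            (real (col_rank G (insert j S)) - real (col_rank G S)))"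
proof -
  define D where "D = {0..<n} - {j}"
  have D: "finite D" "card D = n - 1" unfolding D_def using j by auto
  have survivors: "{0..<n} - ({l. f l} \<union> {j}) = D - {l. f l}" for f :: "nat \<Rightarrow> bool"
    unfolding D_def by auto
  have "measure_pmf.prob (erasure_pmf n j p) {f. \<not> recoverable C ({0..<n} - ({l. f l} \<union> {j})) j}
      = (\<Sum>E\<in>Pow D. p ^ card E * (1 - p) ^ (card D - card E) *
            (if \<not> recoverable C (D - E) j then 1 else 0))"
    unfolding erasure_pmf_def survivors D_def[symmetric] using prob_Pi_bernoulli[OF D(1) p] .
  also have "\<dots> = (\<Sum>S\<in>Pow D. p ^ (n - 1 - card S) * (1 - p) ^ card S *
            (if \<not> recoverable C S j then 1 else 0))"
  proof (rule sum.reindex_bij_witness[where i = "\<lambda>S. D - S" and j = "\<lambda>E. D - E"])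
    fix E assume "E \<in> Pow D"
    then have "card (D - E) = card D - card E" "card E \<le> card D"
      using D(1) by (auto simp: card_Diff_subset finite_subset card_mono)
    then have "n - 1 - card (D - E) = card E" using D(2) by auto
    then show "p ^ (n - 1 - card (D - E)) * (1 - p) ^ card (D - E) *
        (if \<not> recoverable C (D - E) j then 1 else 0) =
        p ^ card E * (1 - p) ^ (card D - card E) * (if \<not> recoverable C (D - E) j then 1 else 0)"
      using \<open>card (D - E) = card D - card E\<close> by (simp only:)
  qed auto
  also have "\<dots> = (\<Sum>S\<in>Pow D. p ^ (n - 1 - card S) * (1 - p) ^ card S *
            (real (col_rank G (insert j S)) - real (col_rank G S)))"
  proof -
    have "real (col_rank G (insert j S)) - real (col_rank G S) =
          (if \<not> recoverable C S j then 1 else 0)" if "S \<in> Pow D" for S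
    proof -
      have "S \<subseteq> {0..<n}" using that unfolding D_def by auto
      then show ?thesis using col_rank_insert_recoverable[OF G C _ j, of S] by simp
    qed
    then show ?thesis by (intro sum.cong) auto
  qed
  finally show ?thesis unfolding D_def .
qed

definition layer_sum :: "('a set \<Rightarrow> real) \<Rightarrow> 'a set \<Rightarrow> nat \<Rightarrow> real" where
  "layer_sum r N g = (\<Sum>T\<in>{T. T \<subseteq> N \<and> card T = g}. r T)"

lemma sum_insert_pairs:
  fixes F :: "'a set \<Rightarrow> real"
  assumes N: "finite N"
  shows "(\<Sum>j\<in>N. \<Sum>S\<in>Pow (N - {j}). F (insert j S)) = (\<Sum>T\<in>Pow N. real (card T) * F T)"
proof -
  have "(\<Sum>S\<in>Pow (N - {j}). F (insert j S)) = (\<Sum>T\<in>{T. T \<in> Pow N \<and> j \<in> T}. F T)"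
    if "j \<in> N" for j
    by (rule sum.reindex_bij_witness[where i = "\<lambda>T. T - {j}" and j = "insert j"])
       (use that in auto)
  then have "(\<Sum>j\<in>N. \<Sum>S\<in>Pow (N - {j}). F (insert j S)) =
             (\<Sum>j\<in>N. \<Sum>T\<in>{T. T \<in> Pow N \<and> j \<in> T}. F T)" by simp
  also have "\<dots> = (\<Sum>T\<in>Pow N. \<Sum>j\<in>{j. j \<in> N \<and> j \<in> T}. F T)"
    using N by (intro sum.swap_restrict) auto
  also have "\<dots> = (\<Sum>T\<in>Pow N. real (card T) * F T)"
    by (intro sum.cong refl) (simp add: Int_absorb1 Collect_conj_eq[symmetric] Int_def[symmetric])
  finally show ?thesis .
qed

lemma sum_remove_pairs:
  fixes F :: "'a set \<Rightarrow> real"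
  assumes N: "finite N"
  shows "(\<Sum>j\<in>N. \<Sum>S\<in>Pow (N - {j}). F S) = (\<Sum>S\<in>Pow N. real (card N - card S) * F S)"
proof -
  have "Pow (N - {j}) = {S. S \<in> Pow N \<and> j \<notin> S}" for j by auto
  then have "(\<Sum>j\<in>N. \<Sum>S\<in>Pow (N - {j}). F S) = (\<Sum>j\<in>N. \<Sum>S\<in>{S. S \<in> Pow N \<and> j \<notin> S}. F S)"
    by simp
  also have "\<dots> = (\<Sum>S\<in>Pow N. \<Sum>j\<in>{j. j \<in> N \<and> j \<notin> S}. F S)"
    using N by (intro sum.swap_restrict) auto
  also have "\<dots> = (\<Sum>S\<in>Pow N. real (card N - card S) * F S)"
  proof (intro sum.cong refl)
    fix S assume "S \<in> Pow N"
    then have "card {j. j \<in> N \<and> j \<notin> S} = card N - card S"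
      using N by (simp add: set_diff_eq[symmetric] card_Diff_subset finite_subset)
    then show "(\<Sum>j\<in>{j. j \<in> N \<and> j \<notin> S}. F S) = real (card N - card S) * F S" by simp
  qed
  finally show ?thesis .
qed

lemma sum_Pow_by_card:
  fixes r :: "'a set \<Rightarrow> real"
  assumes N: "finite N"
  shows "(\<Sum>T\<in>Pow N. w (card T) * r T) = (\<Sum>g\<le>card N. w g * layer_sum r N g)"
proof -
  have "card ` Pow N \<subseteq> {..card N}" using N by (auto intro: card_mono)
  then have "(\<Sum>T\<in>Pow N. w (card T) * r T) =
             (\<Sum>g\<le>card N. \<Sum>T\<in>{T. T \<in> Pow N \<and> card T = g}. w (card T) * r T)"
    using N by (intro sum.group[symmetric]) auto
  also have "\<dots> = (\<Sum>g\<le>card N. w g * layer_sum r N g)"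
    unfolding layer_sum_def by (simp add: sum_distrib_left)
  finally show ?thesis .
qed

lemma sum_atMost_reflect_from_zero:
  fixes f :: "nat \<Rightarrow> 'a::comm_monoid_add"
  assumes "f 0 = 0"
  shows "(\<Sum>g\<le>n. f g) = (\<Sum>t<n. f (n - t))"
proof -
  have "(\<Sum>g\<le>n. f g) = (\<Sum>t<n. f (Suc t))" using sum.atMost_shift[of f n] assms by simp
  also have "\<dots> = (\<Sum>t<n. f (Suc (n - Suc t)))" by (rule sum.nat_diff_reindex[symmetric])
  also have "\<dots> = (\<Sum>t<n. f (n - t))" by (intro sum.cong) (auto simp: Suc_diff_Suc)
  finally show ?thesis .
qed

lemma sum_atMost_reflect_from_top:
  fixes f :: "nat \<Rightarrow> 'a::comm_monoid_add"
  assumes "f n = 0"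
  shows "(\<Sum>g\<le>n. f g) = (\<Sum>t<n. f (n - 1 - t))"
proof -
  have "(\<Sum>g\<le>n. f g) = (\<Sum>t<n. f t)" using assms by (simp add: lessThan_Suc_atMost[symmetric])
  also have "\<dots> = (\<Sum>t<n. f (n - Suc t))" by (rule sum.nat_diff_reindex[symmetric])
  finally show ?thesis by simp
qed

lemma sum_weighted_increments:
  fixes r :: "'a set \<Rightarrow> real" and p :: real
  assumes N: "finite N" "card N = n"
  shows "(\<Sum>j\<in>N. \<Sum>S\<in>Pow (N - {j}). p ^ (n - 1 - card S) * (1 - p) ^ card S *
            (r (insert j S) - r S)) =
         (\<Sum>t<n. p ^ t * (1 - p) ^ (n - 1 - t) *
            (real (n - t) * layer_sum r N (n - t) - real (t + 1) * layer_sum r N (n - 1 - t)))"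
proof -
  define a where "a s = p ^ (n - 1 - s) * (1 - p) ^ s" for s
  have a_reflect: "a (n - Suc t) = p ^ t * (1 - p) ^ (n - Suc t)" if "t < n" for t
    unfolding a_def using that by (simp add: diff_diff_cancel)
  have card_insert: "card (insert j S) = Suc (card S)" if "S \<subseteq> N - {j}" for j S
  proof -
    have "finite S" "j \<notin> S" using that N(1) finite_subset by auto
    then show ?thesis by simp
  qed
  have "(\<Sum>j\<in>N. \<Sum>S\<in>Pow (N - {j}). a (card S) * r (insert j S)) =
        (\<Sum>j\<in>N. \<Sum>S\<in>Pow (N - {j}). a (card (insert j S) - 1) * r (insert j S))"
    by (intro sum.cong refl) (simp add: card_insert)
  also have "\<dots> = (\<Sum>T\<in>Pow N. real (card T) * (a (card T - 1) * r T))"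
    by (rule sum_insert_pairs[OF N(1)])
  also have "\<dots> = (\<Sum>g\<le>n. real g * a (g - 1) * layer_sum r N g)"
    using sum_Pow_by_card[OF N(1), of "\<lambda>g. real g * a (g - 1)" r] N(2) by (simp add: mult.assoc)
  also have "\<dots> = (\<Sum>t<n. p ^ t * (1 - p) ^ (n - 1 - t) * (real (n - t) * layer_sum r N (n - t)))"
    by (subst sum_atMost_reflect_from_zero) (auto intro!: sum.cong simp: a_reflect)
  finally have inserted: "(\<Sum>j\<in>N. \<Sum>S\<in>Pow (N - {j}). a (card S) * r (insert j S)) = \<dots>" .
  have "(\<Sum>j\<in>N. \<Sum>S\<in>Pow (N - {j}). a (card S) * r S) =
        (\<Sum>S\<in>Pow N. real (card N - card S) * (a (card S) * r S))"
    by (rule sum_remove_pairs[OF N(1)])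
  also have "\<dots> = (\<Sum>g\<le>n. real (n - g) * a g * layer_sum r N g)"
    using sum_Pow_by_card[OF N(1), of "\<lambda>g. real (n - g) * a g" r] N(2) by (simp add: mult.assoc)
  also have "\<dots> = (\<Sum>t<n. p ^ t * (1 - p) ^ (n - 1 - t) *
                      (real (t + 1) * layer_sum r N (n - 1 - t)))"
    by (subst sum_atMost_reflect_from_top) (auto intro!: sum.cong simp: a_reflect)
  finally have removed: "(\<Sum>j\<in>N. \<Sum>S\<in>Pow (N - {j}). a (card S) * r S) = \<dots>" .
  show ?thesis
    using inserted removed unfolding a_def
    by (simp add: right_diff_distrib sum_subtractf)
qed

theorem proposition1:
  fixes G :: "bit mat" and C :: "bit vec set" and n k :: nat and p :: real
  assumes "generator_matrix G k n C"
    and "no_idle_bits C n"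
    and "min_dist_ge C n 2"
    and "0 \<le> p" and "p \<le> 1"
  shows "nonrec_prob C n p =
    (1 / real n) * (\<Sum>t<n. p ^ t * (1 - p) ^ (n - 1 - t) *
       (real (n - t) * real (info_fun G (n - t)) - real (t + 1) * real (info_fun G (n - 1 - t))))"
proof -
  have G: "G \<in> carrier_mat k n" and C: "C = {transpose_mat G *\<^sub>v u | u. u \<in> carrier_vec k}"
    using assms(1) unfolding generator_matrix_def by auto
  have N: "finite {0..<n}" "card {0..<n} = n" by auto
  define rk where "rk T = real (col_rank G T)" for T
  have info: "real (info_fun G g) = layer_sum rk {0..<n} g" for g
    using G unfolding info_fun_def layer_sum_def rk_def col_rank_def by (simp add: of_nat_sum)
  have "nonrec_prob C n p = 1 / real n * (\<Sum>j\<in>{0..<n}. \<Sum>S\<in>Pow ({0..<n} - {j}).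
          p ^ (n - 1 - card S) * (1 - p) ^ card S * (rk (insert j S) - rk S))"
    unfolding nonrec_prob_def rk_def using nonrec_prob_position[OF G C _ assms(4,5)]
    by (simp add: atLeast0LessThan)
  also have "\<dots> = (1 / real n) * (\<Sum>t<n. p ^ t * (1 - p) ^ (n - 1 - t) *
       (real (n - t) * real (info_fun G (n - t)) - real (t + 1) * real (info_fun G (n - 1 - t))))"
    unfolding sum_weighted_increments[OF N] info ..
  finally show ?thesis .
qed

end
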